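(* Consider the sub-$\ell^\infty$ structure on $\mathbb{R}^3$ defined by $Y_1=\partial_x+\partial_y+y^2\partial_z$, $Y_2=\partial_x-\partial_y+y^2\partial_z$. If an extremal pair $(\lambda,\gamma)$ restricted to an open interval $I$ is an abnormal arc and $\gamma$ is not constant on $I$, then $u_1=u_2$ a.e. on $I$ and $\gamma(I)$ is contained in a line $\{y=0,\ z=z_0\}$ for some $z_0\in\mathbb{R}$. Conversely, every admissible trajectory contained in such a line admits an extremal lift whose restriction to its whole domain is an abnormal arc.
   Context: Sub-$\ell^\infty$ structure defined by smooth vector fields $X_1,\dots,X_k$ on a manifold $M$ (here $X_1=Y_1$, $X_2=Y_2$): an admissible trajectory is an absolutely continuous curve $\gamma:[0,T]\to M$ together with a measurable control $u=(u_1,\dots,u_k):[0,T]\to\mathbb{R}^k$ with $|u_i(t)|\le1$ for all $i$ and a.e. $t$, such that $\dot\gamma(t)=\sum_i u_i(t)X_i(\gamma(t))$ for a.e. $t$. An extremal pair is a pair $(\lambda,\gamma)$ where $\gamma$ is admissible with control $u$ and $\lambda:[0,T]\to T^*M$ is absolutely continuous with $\lambda(t)\in T^*_{\gamma(t)}M\setminus\{0\}$, such that, with $\mathcal H(\lambda,p,u)=\sum_i u_i\langle\lambda,X_i(p)\rangle$, in canonical coordinates $\dot\lambda=-\partial_p\mathcal H(\lambda,\gamma,u)$, $\dot\gamma=\partial_\lambda\mathcal H(\lambda,\gamma,u)$ a.e., and there is a constant $\lambda_0\ge0$ with $\sum_iu_i(t)\langle\lambda(t),X_i(\gamma(t))\rangle=\sum_i|\langle\lambda(t),X_i(\gamma(t))\rangle|=\lambda_0$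 for a.e. $t$; $\gamma$ is then an extremal trajectory and $\lambda$ an extremal lift. The switching functions are $\varphi_j(t)=\langle\lambda(t),X_j(\gamma(t))\rangle$. The restriction of an extremal pair to an open interval $I$ is an abnormal arc if $\varphi_j\equiv0$ on $I$ for all $j=1,\dots,k$. *)

theory Defs
  imports "HOL-Analysis.Analysis"
begin

definition abs_cont_on :: "real set \<Rightarrow> (real \<Rightarrow> 'a::real_normed_vector) \<Rightarrow> bool" where
  "abs_cont_on S f \<longleftrightarrow>
     (\<forall>\<epsilon>>0. \<exists>\<delta>>0. \<forall>(n::nat) (a::nat \<Rightarrow> real) (b::nat \<Rightarrow> real).
        (\<forall>i<n. a i \<in> S \<and> b i \<in> S \<and> a i \<le> b i) \<and>
        (\<forall>i. Suc i < n \<longrightarrow> b i \<le> a (Suc i)) \<and>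
        (\<Sum>i<n. b i - a i) < \<delta>
        \<longrightarrow> (\<Sum>i<n. norm (f (b i) - f (a i))) < \<epsilon>)"

text \<open>Sub-l-infinity structure on a Euclidean space 'a given by k vector fields X 0, ..., X (k-1).
  Covectors are identified with vectors via the inner product. Controls u i, i<k.\<close>
definition admissible ::
  "(nat \<Rightarrow> 'a::euclidean_space \<Rightarrow> 'a) \<Rightarrow> nat \<Rightarrow> real \<Rightarrow> (real \<Rightarrow> 'a) \<Rightarrow> (nat \<Rightarrow> real \<Rightarrow> real) \<Rightarrow> bool" where
  "admissible X k T \<gamma> u \<longleftrightarrow>
     abs_cont_on {0..T} \<gamma> \<and>
     (\<forall>i<k. u i \<in> borel_measurable (lebesgue_on {0..T})) \<and>
     (AE t in lebesgue_on {0..T}. \<forall>i<k. \<bar>u i t\<bar> \<le> 1) \<and>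
     (AE t in lebesgue_on {0..T}. (\<gamma> has_vector_derivative (\<Sum>i<k. u i t *\<^sub>R X i (\<gamma> t))) (at t))"

definition ctrlH :: "(nat \<Rightarrow> 'a::euclidean_space \<Rightarrow> 'a) \<Rightarrow> nat \<Rightarrow> 'a \<Rightarrow> 'a \<Rightarrow> (nat \<Rightarrow> real) \<Rightarrow> real" where
  "ctrlH X k l p w = (\<Sum>i<k. w i * inner l (X i p))"

text \<open>The adjoint equation lambda' = - d_p H is expressed by: the gradient g of
  p \<mapsto> H(lambda(t), p, u(t)) at gamma(t) exists and lambda'(t) = -g.
  The state equation gamma' = d_lambda H is the admissibility equation.\<close>
definition extremal_pair ::
  "(nat \<Rightarrow> 'a::euclidean_space \<Rightarrow> 'a) \<Rightarrow> nat \<Rightarrow> real \<Rightarrow> (real \<Rightarrow> 'a) \<Rightarrow> (real \<Rightarrow> 'a) \<Rightarrow> (nat \<Rightarrow> real \<Rightarrow> real) \<Rightarrow> bool" where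
  "extremal_pair X k T lam \<gamma> u \<longleftrightarrow>
     admissible X k T \<gamma> u \<and>
     abs_cont_on {0..T} lam \<and>
     (\<forall>t\<in>{0..T}. lam t \<noteq> 0) \<and>
     (AE t in lebesgue_on {0..T}. \<exists>g.
        ((\<lambda>p. ctrlH X k (lam t) p (\<lambda>i. u i t)) has_derivative (\<lambda>h. inner g h)) (at (\<gamma> t)) \<and>
        (lam has_vector_derivative (- g)) (at t)) \<and>
     (\<exists>lam0\<ge>0. AE t in lebesgue_on {0..T}.
        (\<Sum>i<k. u i t * inner (lam t) (X i (\<gamma> t))) = (\<Sum>i<k. \<bar>inner (lam t) (X i (\<gamma> t))\<bar>) \<and>
        (\<Sum>i<k. \<bar>inner (lam t) (X i (\<gamma> t))\<bar>) = lam0)"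

definition switching :: "(nat \<Rightarrow> 'a::euclidean_space \<Rightarrow> 'a) \<Rightarrow> (real \<Rightarrow> 'a) \<Rightarrow> (real \<Rightarrow> 'a) \<Rightarrow> nat \<Rightarrow> real \<Rightarrow> real" where
  "switching X lam \<gamma> j t = inner (lam t) (X j (\<gamma> t))"

definition abnormal_arc ::
  "(nat \<Rightarrow> 'a::euclidean_space \<Rightarrow> 'a) \<Rightarrow> nat \<Rightarrow> real \<Rightarrow> (real \<Rightarrow> 'a) \<Rightarrow> (real \<Rightarrow> 'a) \<Rightarrow> (nat \<Rightarrow> real \<Rightarrow> real) \<Rightarrow> real \<Rightarrow> real \<Rightarrow> bool" where
  "abnormal_arc X k T lam \<gamma> u a b \<longleftrightarrow>
     extremal_pair X k T lam \<gamma> u \<and> 0 \<le> a \<and> a < b \<and> b \<le> T \<and>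
     (\<forall>t\<in>{a<..<b}. \<forall>j<k. switching X lam \<gamma> j t = 0)"

text \<open>Points of R^3 are triples (x, y, z). The fields Y_1 = d_x + d_y + y^2 d_z and
  Y_2 = d_x - d_y + y^2 d_z are indexed as Y 0 and Y 1.\<close>
definition Y :: "nat \<Rightarrow> real \<times> real \<times> real \<Rightarrow> real \<times> real \<times> real" where
  "Y i p = (case p of (x, y, z) \<Rightarrow> if i = 0 then (1, 1, y^2) else (1, -1, y^2))"

end

theory Submission
  imports Defs
begin

text \<open>On an abnormal arc both switching functions vanish, so \<open>\<lambda>\<^sub>2 = 0\<close> and
  \<open>\<lambda>\<^sub>1 = -\<lambda>\<^sub>3 y\<^sup>2\<close>. The Hamiltonian depends on the state only through \<open>y\<^sup>2\<close>, so
  \<open>\<lambda>\<^sub>1\<close> and \<open>\<lambda>\<^sub>3\<close> are constant, and \<open>\<lambda>\<^sub>3 \<noteq> 0\<close> because \<open>\<lambda> \<noteq> 0\<close>; hence \<open>y\<^sup>2\<close> is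
  constant. Differentiating \<open>\<lambda>\<^sub>2 = 0\<close> and \<open>y\<^sup>2 = const\<close> gives \<open>(u\<^sub>1 + u\<^sub>2) y = 0\<close> and
  \<open>(u\<^sub>1 - u\<^sub>2) y = 0\<close> a.e. If \<open>y \<noteq> 0\<close> both controls vanish and \<open>\<gamma>\<close> is constant; otherwise
  \<open>y = 0\<close>, which forces \<open>u\<^sub>1 = u\<^sub>2\<close> and \<open>z' = (u\<^sub>1 + u\<^sub>2) y\<^sup>2 = 0\<close>. Conversely, the constant
  covector \<open>dz\<close> annihilates \<open>Y\<^sub>1, Y\<^sub>2\<close> on \<open>{y = 0}\<close> and solves the adjoint equation there,
  since \<open>\<partial>\<^sub>pH\<close> is proportional to \<open>y\<close>.

  The analytic input is that an absolutely continuous function whose derivative vanishes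
  almost everywhere is constant, proved by real induction: the exceptional null set is covered
  by an open set of small measure, on which absolute continuity controls the increment, and
  elsewhere the derivative bound does.\<close>

lemma real_induction:
  fixes a b :: real
  assumes "a \<le> b"
    and step: "\<And>s. s \<in> {a..b} \<Longrightarrow> (\<forall>c\<in>{a..<s}. P c) \<Longrightarrow> \<exists>r>0. \<forall>c\<in>{s..<s+r}. P c"
  shows "P b"
proof (rule ccontr)
  assume "\<not> P b"
  define F where "F = {c \<in> {a..b}. \<not> P c}"
  have "b \<in> F" using \<open>\<not> P b\<close> \<open>a \<le> b\<close> by (simp add: F_def)
  have bdd: "bdd_below F" by (rule bdd_belowI[of _ a]) (simp add: F_def)
  define s where "s = Inf F"
  have "a \<le> s" unfolding s_def using \<open>b \<in> F\<close> by (intro cInf_greatest) (auto simp: F_def)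
  moreover have "s \<le> b" unfolding s_def using \<open>b \<in> F\<close> bdd by (rule cInf_lower)
  moreover have "\<forall>c\<in>{a..<s}. P c"
  proof
    fix c assume c: "c \<in> {a..<s}"
    then have "c \<notin> F" using cInf_lower[OF _ bdd] by (force simp: s_def)
    then show "P c" using c \<open>s \<le> b\<close> by (simp add: F_def)
  qed
  ultimately obtain r where "r > 0" and r: "\<forall>c\<in>{s..<s+r}. P c" using step[of s] by auto
  obtain c where "c \<in> F" "c < s + r"
    using cInf_less_iff[OF _ bdd, of "s + r"] \<open>b \<in> F\<close> \<open>r > 0\<close> by (auto simp: s_def)
  moreover have "s \<le> c" using \<open>c \<in> F\<close> bdd by (simp add: s_def cInf_lower)
  ultimately show False using r by (auto simp: F_def)
qed

definition interval_chain :: "real \<Rightarrow> real \<Rightarrow> real set \<Rightarrow> nat \<Rightarrow> (nat \<Rightarrow> real) \<Rightarrow> (nat \<Rightarrow> real) \<Rightarrow> bool" where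
  "interval_chain a c U n A B \<longleftrightarrow>
     (\<forall>i<n. a \<le> A i \<and> A i \<le> B i \<and> B i \<le> c \<and> {A i..B i} \<subseteq> U) \<and>
     (\<forall>i. Suc i < n \<longrightarrow> B i \<le> A (Suc i))"

lemma interval_chain_mono:
  "interval_chain a c U n A B \<Longrightarrow> c \<le> c' \<Longrightarrow> interval_chain a c' U n A B"
  unfolding interval_chain_def by force

lemma interval_chain_snoc:
  assumes "interval_chain a c U n A B" "a \<le> c" "c \<le> c'" "{c..c'} \<subseteq> U"
  shows "interval_chain a c' U (Suc n) (A(n := c)) (B(n := c'))"
  using assms unfolding interval_chain_def by (auto simp: less_Suc_eq)

lemma interval_chain_butlast:
  assumes "interval_chain a c U (Suc n) A B"
  shows "interval_chain a (A n) U n A B"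
proof -
  have "B i \<le> A j" if "i < j" "j \<le> n" for i j
    using that
  proof (induction j)
    case (Suc j)
    have chain: "\<forall>k<Suc n. A k \<le> B k" "\<forall>k. Suc k < Suc n \<longrightarrow> B k \<le> A (Suc k)"
      using assms unfolding interval_chain_def by auto
    show ?case
    proof (cases "i = j")
      case False
      then have "B i \<le> A j" using Suc by simp
      also have "\<dots> \<le> B j" using chain Suc.prems by simp
      also have "\<dots> \<le> A (Suc j)" using chain Suc.prems by simp
      finally show ?thesis .
    qed (use chain Suc.prems in simp)
  qed simp
  then show ?thesis using assms unfolding interval_chain_def by auto
qed

lemma interval_chain_length_le_measure:
  assumes "U \<in> lmeasurable" "interval_chain a c U n A B"
  shows "(\<Sum>i<n. B i - A i) \<le> measure lebesgue (U \<inter> {..<c})"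
  using assms(2)
proof (induction n arbitrary: c)
  case (Suc n)
  have below: "U \<inter> {..<A n} \<in> lmeasurable" and last: "{A n..<B n} \<in> lmeasurable"
    using assms(1) by (auto intro: fmeasurable_Int_fmeasurable measurable_convex)
  have "A n \<le> B n" "B n \<le> c" "{A n..B n} \<subseteq> U"
    using Suc.prems unfolding interval_chain_def by auto
  then have "U \<inter> {..<A n} \<union> {A n..<B n} \<subseteq> U \<inter> {..<c}" by auto
  then have "measure lebesgue (U \<inter> {..<A n} \<union> {A n..<B n}) \<le> measure lebesgue (U \<inter> {..<c})"
    using assms(1) below last by (intro measure_mono_fmeasurable fmeasurable_Int_fmeasurable) auto
  moreover have "measure lebesgue (U \<inter> {..<A n} \<union> {A n..<B n})
      = measure lebesgue (U \<inter> {..<A n}) + (B n - A n)"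
  proof -
    have "{A n..<B n} - U \<inter> {..<A n} = {A n..<B n}" by auto
    then show ?thesis using measure_Un2[OF below last] \<open>A n \<le> B n\<close> by simp
  qed
  ultimately show ?case
    using Suc.IH[OF interval_chain_butlast[OF Suc.prems]] by simp
qed simp

lemma null_set_open_cover:
  assumes "N \<in> null_sets lebesgue" "\<delta> > 0"
  obtains U where "open U" "N \<subseteq> U" "U \<in> lmeasurable" "measure lebesgue U < \<delta>"
proof -
  obtain U where U: "open U" "N \<subseteq> U" "U - N \<in> lmeasurable" "emeasure lebesgue (U - N) < ennreal \<delta>"
    using sets_lebesgue_outer_open[of N \<delta>] assms by auto
  have "N \<in> lmeasurable" using assms(1) by (auto simp: fmeasurable_def)
  moreover have "U = (U - N) \<union> N" using U(2) by blast
  ultimately have "U \<in> lmeasurable" using U(3) by (metis fmeasurable.Un)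
  moreover have "measure lebesgue (U - N) = measure lebesgue U"
    using measure_Diff_null_set[OF fmeasurableD assms(1)] \<open>U \<in> lmeasurable\<close> by blast
  moreover have "measure lebesgue (U - N) < \<delta>"
    using U(3,4) assms(2) by (simp add: emeasure_eq_measure2 ennreal_less_iff)
  ultimately show ?thesis using that U(1,2) by simp
qed

lemma has_real_derivative_0_local_bound:
  fixes f :: "real \<Rightarrow> real"
  assumes "(f has_real_derivative 0) (at s)" "\<epsilon> > 0"
  obtains r where "r > 0" "\<And>t. \<bar>t - s\<bar> < r \<Longrightarrow> \<bar>f t - f s\<bar> \<le> \<epsilon> * \<bar>t - s\<bar>"
proof -
  have "((\<lambda>t. (f t - f s) / (t - s)) \<longlongrightarrow> 0) (at s)"
    using assms(1) by (simp add: has_field_derivative_iff)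
  from LIM_D[OF this assms(2)] obtain r where "r > 0"
    and r: "\<And>t. t \<noteq> s \<and> norm (t - s) < r \<Longrightarrow> \<bar>(f t - f s) / (t - s)\<bar> < \<epsilon>"
    by auto
  have "\<bar>f t - f s\<bar> \<le> \<epsilon> * \<bar>t - s\<bar>" if "\<bar>t - s\<bar> < r" for t
    using r[of t] that by (cases "t = s") (auto simp: abs_divide divide_less_eq)
  then show ?thesis using that \<open>r > 0\<close> by blast
qed

text \<open>With \<open>U\<close> a small open cover of the null set off which \<open>f' = 0\<close>, absolute continuity makes
  the sum over the chain small.\<close>
definition chain_controlled :: "(real \<Rightarrow> real) \<Rightarrow> real set \<Rightarrow> real \<Rightarrow> real \<Rightarrow> real \<Rightarrow> bool" where
  "chain_controlled f U \<epsilon> a c \<longleftrightarrow> (\<exists>n A B. interval_chain a c U n A B \<and>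
     \<bar>f c - f a\<bar> \<le> \<epsilon> * (c - a) + (\<Sum>i<n. \<bar>f (B i) - f (A i)\<bar>))"

lemma chain_controlled_refl: "chain_controlled f U \<epsilon> a a"
  unfolding chain_controlled_def interval_chain_def by (rule exI[of _ 0]) simp

lemma chain_controlled_snoc:
  assumes "chain_controlled f U \<epsilon> a c" "a \<le> c" "c \<le> c'" "{c..c'} \<subseteq> U" "\<epsilon> \<ge> 0"
  shows "chain_controlled f U \<epsilon> a c'"
proof -
  obtain n A B where chain: "interval_chain a c U n A B"
    and le: "\<bar>f c - f a\<bar> \<le> \<epsilon> * (c - a) + (\<Sum>i<n. \<bar>f (B i) - f (A i)\<bar>)"
    using assms(1) unfolding chain_controlled_def by blast
  have "\<epsilon> * c \<le> \<epsilon> * c'" using assms(3,5) by (simp add: mult_left_mono)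
  then have "\<bar>f c' - f a\<bar> \<le> \<epsilon> * (c' - a) + (\<Sum>i<Suc n. \<bar>f ((B(n := c')) i) - f ((A(n := c)) i)\<bar>)"
    using le by (simp add: algebra_simps)
  then show ?thesis
    unfolding chain_controlled_def using interval_chain_snoc[OF chain assms(2-4)] by blast
qed

lemma chain_controlled_step:
  assumes "chain_controlled f U \<epsilon> a c" "c \<le> c'" "\<bar>f c' - f c\<bar> \<le> \<epsilon> * (c' - c)"
  shows "chain_controlled f U \<epsilon> a c'"
proof -
  obtain n A B where chain: "interval_chain a c U n A B"
    and le: "\<bar>f c - f a\<bar> \<le> \<epsilon> * (c - a) + (\<Sum>i<n. \<bar>f (B i) - f (A i)\<bar>)"
    using assms(1) unfolding chain_controlled_def by blast
  have "\<bar>f c' - f a\<bar> \<le> \<epsilon> * (c' - a) + (\<Sum>i<n. \<bar>f (B i) - f (A i)\<bar>)"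
    using le assms(3) by (simp add: algebra_simps)
  then show ?thesis
    unfolding chain_controlled_def using interval_chain_mono[OF chain assms(2)] by blast
qed

lemma chain_controlled_interval:
  fixes f :: "real \<Rightarrow> real"
  assumes "open U" "N \<subseteq> U" "a \<le> b" "\<epsilon> > 0"
    and deriv: "\<And>t. t \<in> {a..b} \<Longrightarrow> t \<notin> N \<Longrightarrow> (f has_real_derivative 0) (at t)"
  shows "chain_controlled f U \<epsilon> a b"
proof (rule real_induction[OF \<open>a \<le> b\<close>])
  fix s assume s: "s \<in> {a..b}" and below: "\<forall>c\<in>{a..<s}. chain_controlled f U \<epsilon> a c"
  have approach: "\<exists>c. chain_controlled f U \<epsilon> a c \<and> a \<le> c \<and> c \<le> s \<and> s - r < c" if "r > 0" for r
  proof (cases "s = a")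
    case False
    then show ?thesis
      using below s that by (intro exI[of _ "max a (s - r/2)"]) auto
  qed (use chain_controlled_refl[of f U \<epsilon> a] that in auto)
  show "\<exists>r>0. \<forall>c'\<in>{s..<s + r}. chain_controlled f U \<epsilon> a c'"
  proof (cases "s \<in> N")
    case True
    then obtain r where "r > 0" and ball: "ball s r \<subseteq> U" using assms(1,2) open_contains_ball by blast
    obtain c where c: "chain_controlled f U \<epsilon> a c" "a \<le> c" "c \<le> s" "s - r < c"
      using approach \<open>r > 0\<close> by blast
    have "chain_controlled f U \<epsilon> a c'" if "c' \<in> {s..<s + r}" for c'
    proof (rule chain_controlled_snoc[OF c(1,2)])
      show "c \<le> c'" using c that by simp
      have "{c..c'} \<subseteq> ball s r" using c that by (auto simp: dist_real_def)
      then show "{c..c'} \<subseteq> U" using ball by blast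
    qed (use \<open>\<epsilon> > 0\<close> in simp)
    then show ?thesis using \<open>r > 0\<close> by blast
  next
    case False
    then obtain r where "r > 0" and r: "\<And>t. \<bar>t - s\<bar> < r \<Longrightarrow> \<bar>f t - f s\<bar> \<le> \<epsilon> * \<bar>t - s\<bar>"
      using has_real_derivative_0_local_bound[OF deriv[OF s] \<open>\<epsilon> > 0\<close>] by blast
    obtain c where c: "chain_controlled f U \<epsilon> a c" "c \<le> s" "s - r < c"
      using approach \<open>r > 0\<close> by blast
    have "chain_controlled f U \<epsilon> a c'" if "c' \<in> {s..<s + r}" for c'
    proof (rule chain_controlled_step[OF c(1)])
      show "c \<le> c'" using c that by simp
      have "\<bar>f c' - f s\<bar> \<le> \<epsilon> * (c' - s)" "\<bar>f c - f s\<bar> \<le> \<epsilon> * (s - c)"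
        using r[of c'] r[of c] that c by auto
      then show "\<bar>f c' - f c\<bar> \<le> \<epsilon> * (c' - c)" by (simp add: algebra_simps)
    qed
    then show ?thesis using \<open>r > 0\<close> by blast
  qed
qed

lemma abs_cont_on_deriv_0_increment_small:
  fixes f :: "real \<Rightarrow> real"
  assumes ac: "abs_cont_on S f" and ab: "{a..b} \<subseteq> S" "a \<le> b"
    and N: "N \<in> null_sets lebesgue"
    and deriv: "\<And>t. t \<in> {a..b} \<Longrightarrow> t \<notin> N \<Longrightarrow> (f has_real_derivative 0) (at t)"
    and "\<epsilon> > 0"
  shows "\<bar>f b - f a\<bar> < \<epsilon> * (b - a) + \<epsilon>"
proof -
  obtain \<delta> where "\<delta> > 0" and \<delta>: "\<forall>n A B. (\<forall>i<n. A i \<in> S \<and> B i \<in> S \<and> A i \<le> B i) \<and>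
      (\<forall>i. Suc i < n \<longrightarrow> B i \<le> A (Suc i)) \<and> (\<Sum>i<n. B i - A i) < \<delta> \<longrightarrow>
      (\<Sum>i<n. norm (f (B i) - f (A i))) < \<epsilon>"
    using ac \<open>\<epsilon> > 0\<close> unfolding abs_cont_on_def by blast
  obtain U where U: "open U" "N \<subseteq> U" "U \<in> lmeasurable" "measure lebesgue U < \<delta>"
    using null_set_open_cover[OF N \<open>\<delta> > 0\<close>] .
  obtain n A B where chain: "interval_chain a b U n A B"
    and le: "\<bar>f b - f a\<bar> \<le> \<epsilon> * (b - a) + (\<Sum>i<n. \<bar>f (B i) - f (A i)\<bar>)"
    using chain_controlled_interval[OF U(1,2) ab(2) \<open>\<epsilon> > 0\<close> deriv]
    unfolding chain_controlled_def by blast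
  have "(\<Sum>i<n. B i - A i) \<le> measure lebesgue (U \<inter> {..<b})"
    by (rule interval_chain_length_le_measure[OF U(3) chain])
  also have "\<dots> \<le> measure lebesgue U"
    using U(3) by (intro measure_mono_fmeasurable) auto
  finally have "(\<Sum>i<n. B i - A i) < \<delta>" using U(4) by simp
  moreover have "\<forall>i<n. A i \<in> S \<and> B i \<in> S \<and> A i \<le> B i" "\<forall>i. Suc i < n \<longrightarrow> B i \<le> A (Suc i)"
    using chain ab(1) unfolding interval_chain_def by (force intro: order_trans)+
  ultimately have "(\<Sum>i<n. norm (f (B i) - f (A i))) < \<epsilon>" using \<delta> by blast
  then show ?thesis using le by simp
qed

lemma abs_cont_on_deriv_0_const:
  fixes f :: "real \<Rightarrow> real"
  assumes "abs_cont_on S f" "{a..b} \<subseteq> S" "a \<le> b" "N \<in> null_sets lebesgue"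
    and "\<And>t. t \<in> {a..b} \<Longrightarrow> t \<notin> N \<Longrightarrow> (f has_real_derivative 0) (at t)"
  shows "f b = f a"
proof (rule ccontr)
  assume "f b \<noteq> f a"
  define \<epsilon> where "\<epsilon> = \<bar>f b - f a\<bar> / (b - a + 1)"
  have "\<epsilon> > 0" using \<open>f b \<noteq> f a\<close> \<open>a \<le> b\<close> by (simp add: \<epsilon>_def)
  have "\<epsilon> * (b - a) + \<epsilon> = \<epsilon> * (b - a + 1)" by (simp add: algebra_simps)
  also have "\<dots> = \<bar>f b - f a\<bar>" using \<open>a \<le> b\<close> by (simp add: \<epsilon>_def)
  finally have "\<epsilon> * (b - a) + \<epsilon> = \<bar>f b - f a\<bar>" .
  then show False using abs_cont_on_deriv_0_increment_small[OF assms \<open>\<epsilon> > 0\<close>] by simp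
qed

lemma abs_cont_on_AE_deriv_0_const:
  fixes f :: "real \<Rightarrow> real"
  assumes ac: "abs_cont_on S f" and sub: "{a<..<b} \<subseteq> S"
    and deriv: "AE t in lebesgue_on {a<..<b}. (f has_real_derivative 0) (at t)"
    and "s \<in> {a<..<b}" "t \<in> {a<..<b}"
  shows "f s = f t"
proof -
  obtain N where N: "N \<in> null_sets (lebesgue_on {a<..<b})"
    and deriv_N: "\<And>t. t \<in> {a<..<b} - N \<Longrightarrow> (f has_real_derivative 0) (at t)"
    using AE_E3[OF deriv] by auto
  have "N \<in> null_sets lebesgue" using N by (simp add: null_sets_restrict_space)
  have "f y = f x" if "x \<in> {a<..<b}" "y \<in> {a<..<b}" "x \<le> y" for x y
    using that sub deriv_N
    by (intro abs_cont_on_deriv_0_const[OF ac _ _ \<open>N \<in> null_sets lebesgue\<close>]) auto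
  then show ?thesis using assms(4,5) by (metis linear)
qed

lemma abs_cont_on_const: "abs_cont_on S (\<lambda>t. c)"
  unfolding abs_cont_on_def by (auto intro: exI[of _ 1])

lemma abs_cont_on_compose_contraction:
  assumes "abs_cont_on S f" "\<And>x y. norm (g x - g y) \<le> norm (x - y)"
  shows "abs_cont_on S (\<lambda>t. g (f t))"
  unfolding abs_cont_on_def
proof (intro allI impI)
  fix \<epsilon> :: real assume "\<epsilon> > 0"
  then obtain \<delta> where "\<delta> > 0" and \<delta>: "\<forall>n A B. (\<forall>i<n. A i \<in> S \<and> B i \<in> S \<and> A i \<le> B i) \<and>
      (\<forall>i. Suc i < n \<longrightarrow> B i \<le> A (Suc i)) \<and> (\<Sum>i<n. B i - A i) < \<delta> \<longrightarrow>
      (\<Sum>i<n. norm (f (B i) - f (A i))) < \<epsilon>"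
    using assms(1) unfolding abs_cont_on_def by blast
  show "\<exists>\<delta>>0. \<forall>n A B. (\<forall>i<n. A i \<in> S \<and> B i \<in> S \<and> A i \<le> B i) \<and>
      (\<forall>i. Suc i < n \<longrightarrow> B i \<le> A (Suc i)) \<and> (\<Sum>i<n. B i - A i) < \<delta> \<longrightarrow>
      (\<Sum>i<n. norm (g (f (B i)) - g (f (A i)))) < \<epsilon>"
  proof (intro exI[of _ \<delta>] conjI allI impI \<open>\<delta> > 0\<close>)
    fix n A B
    assume "(\<forall>i<n. A i \<in> S \<and> B i \<in> S \<and> A i \<le> B i) \<and>
      (\<forall>i. Suc i < n \<longrightarrow> B i \<le> A (Suc i)) \<and> (\<Sum>i<n. B i - A i) < \<delta>"
    then have "(\<Sum>i<n. norm (f (B i) - f (A i))) < \<epsilon>" using \<delta> by blast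
    moreover have "(\<Sum>i<n. norm (g (f (B i)) - g (f (A i)))) \<le> (\<Sum>i<n. norm (f (B i) - f (A i)))"
      by (intro sum_mono assms(2))
    ultimately show "(\<Sum>i<n. norm (g (f (B i)) - g (f (A i)))) < \<epsilon>" by linarith
  qed
qed

lemma abs_cont_on_fst:
  assumes "abs_cont_on S f"
  shows "abs_cont_on S (\<lambda>t. fst (f t))"
proof (rule abs_cont_on_compose_contraction[where g = fst, OF assms])
  show "norm (fst x - fst y) \<le> norm (x - y)" for x y
    using norm_fst_le[of "fst (x - y)" "snd (x - y)"] by (simp add: minus_prod_def)
qed

lemma abs_cont_on_snd:
  assumes "abs_cont_on S f"
  shows "abs_cont_on S (\<lambda>t. snd (f t))"
proof (rule abs_cont_on_compose_contraction[where g = snd, OF assms])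
  show "norm (snd x - snd y) \<le> norm (x - y)" for x y
    using norm_snd_le[of "snd (x - y)" "fst (x - y)"] by (simp add: minus_prod_def)
qed

lemma has_vector_derivative_fst:
  "(f has_vector_derivative v) F \<Longrightarrow> ((\<lambda>t. fst (f t)) has_vector_derivative fst v) F"
  unfolding has_vector_derivative_def by (drule has_derivative_fst) simp

lemma has_vector_derivative_snd:
  "(f has_vector_derivative v) F \<Longrightarrow> ((\<lambda>t. snd (f t)) has_vector_derivative snd v) F"
  unfolding has_vector_derivative_def by (drule has_derivative_snd) simp

lemma has_real_derivative_const_on_interval:
  fixes f :: "real \<Rightarrow> real"
  assumes "(f has_real_derivative D) (at t)" "t \<in> {a<..<b}" "\<And>s. s \<in> {a<..<b} \<Longrightarrow> f s = f t"
  shows "D = 0"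
proof (rule DERIV_local_const[OF assms(1)])
  show "0 < min (t - a) (b - t)" using assms(2) by simp
  show "\<forall>y. \<bar>t - y\<bar> < min (t - a) (b - t) \<longrightarrow> f t = f y"
  proof (intro allI impI)
    fix y assume "\<bar>t - y\<bar> < min (t - a) (b - t)"
    then have "y \<in> {a<..<b}" by auto
    then show "f t = f y" using assms(3) by simp
  qed
qed

lemma AE_lebesgue_on_subset:
  assumes "AE t in lebesgue_on S. P t" "T \<subseteq> S" "S \<in> sets lebesgue" "T \<in> sets lebesgue"
  shows "AE t in lebesgue_on T. P t"
proof -
  have "AE t in lebesgue. t \<in> S \<longrightarrow> P t" using assms(1,3) by (simp add: AE_restrict_space_iff)
  then have "AE t in lebesgue. t \<in> T \<longrightarrow> P t" using assms(2) by (auto elim: AE_mp)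
  then show ?thesis using assms(4) by (simp add: AE_restrict_space_iff)
qed

lemma abs_cont_on_triple_components:
  assumes "abs_cont_on S f" "f = (\<lambda>t. (f1 t, f2 t, f3 t))"
  shows "abs_cont_on S f1" "abs_cont_on S f2" "abs_cont_on S f3"
  using abs_cont_on_fst[OF assms(1)] abs_cont_on_fst[OF abs_cont_on_snd[OF assms(1)]]
    abs_cont_on_snd[OF abs_cont_on_snd[OF assms(1)]]
  by (simp_all add: assms(2))

lemma has_vector_derivative_triple_components:
  fixes f1 f2 f3 :: "real \<Rightarrow> real"
  assumes "((\<lambda>t. (f1 t, f2 t, f3 t)) has_vector_derivative (v1, v2, v3)) (at t)"
  shows "(f1 has_real_derivative v1) (at t)" "(f2 has_real_derivative v2) (at t)"
    "(f3 has_real_derivative v3) (at t)"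
  using has_vector_derivative_fst[OF assms] has_vector_derivative_fst[OF has_vector_derivative_snd[OF assms]]
    has_vector_derivative_snd[OF has_vector_derivative_snd[OF assms]]
  by (simp_all add: has_real_derivative_iff_has_vector_derivative)

lemma ctrlH_Y:
  "ctrlH Y 2 (l1, l2, l3) (x, y, z) w = (w 0 + w 1) * l1 + (w 0 - w 1) * l2 + (w 0 + w 1) * l3 * y^2"
  by (simp add: ctrlH_def Y_def numeral_2_eq_2 algebra_simps)

lemma ctrlH_Y_has_derivative:
  "((\<lambda>p. ctrlH Y 2 (l1, l2, l3) p w) has_derivative (\<lambda>h. inner (0, 2 * (w 0 + w 1) * l3 * y, 0) h))
     (at (x, y, z))"
proof -
  have "ctrlH Y 2 (l1, l2, l3) p w = (w 0 + w 1) * l1 + (w 0 - w 1) * l2 + (w 0 + w 1) * l3 * (fst (snd p))^2" for p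
    using ctrlH_Y by (metis prod.collapse)
  then show ?thesis
    by (simp only:) (auto intro!: derivative_eq_intros simp: algebra_simps)
qed

lemma ctrlH_Y_gradient:
  assumes "((\<lambda>p. ctrlH Y 2 (l1, l2, l3) p w) has_derivative (\<lambda>h. inner g h)) (at (x, y, z))"
  shows "g = (0, 2 * (w 0 + w 1) * l3 * y, 0)"
proof -
  have "(\<lambda>h. inner g h) = (\<lambda>h. inner (0, 2 * (w 0 + w 1) * l3 * y, 0) h)"
    using has_derivative_unique[OF assms ctrlH_Y_has_derivative] .
  then show ?thesis by (metis inner_commute vector_eq_ldot)
qed

lemma sum_Y: "(\<Sum>i<2. w i *\<^sub>R Y i (x, y, z)) = (w 0 + w 1, w 0 - w 1, (w 0 + w 1) * y^2)"
  by (simp add: Y_def numeral_2_eq_2 algebra_simps)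

lemma switching_Y:
  assumes "lam t = (l1, l2, l3)" "\<gamma> t = (x, y, z)"
  shows "switching Y lam \<gamma> 0 t = l1 + l2 + l3 * y^2" "switching Y lam \<gamma> 1 t = l1 - l2 + l3 * y^2"
  using assms by (simp_all add: switching_def Y_def)

lemma Y_extremal_pair_ODE:
  assumes "extremal_pair Y 2 T lam \<gamma> u"
    and \<gamma>: "\<gamma> = (\<lambda>t. (x t, y t, z t))" and lam: "lam = (\<lambda>t. (l1 t, l2 t, l3 t))"
  shows "AE t in lebesgue_on {0..T}.
    (x has_real_derivative u 0 t + u 1 t) (at t) \<and> (y has_real_derivative u 0 t - u 1 t) (at t) \<and>
    (z has_real_derivative (u 0 t + u 1 t) * (y t)^2) (at t) \<and>
    (l1 has_real_derivative 0) (at t) \<and> (l3 has_real_derivative 0) (at t) \<and>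
    (l2 has_real_derivative - (2 * (u 0 t + u 1 t) * l3 t * y t)) (at t)"
proof -
  have "AE t in lebesgue_on {0..T}. (\<gamma> has_vector_derivative (\<Sum>i<2. u i t *\<^sub>R Y i (\<gamma> t))) (at t)"
    and "AE t in lebesgue_on {0..T}. \<exists>g.
      ((\<lambda>p. ctrlH Y 2 (lam t) p (\<lambda>i. u i t)) has_derivative (\<lambda>h. inner g h)) (at (\<gamma> t)) \<and>
      (lam has_vector_derivative - g) (at t)"
    using assms(1) unfolding extremal_pair_def admissible_def by auto
  then show ?thesis
  proof eventually_elim
    case (elim t)
    then obtain g where
      "((\<lambda>p. ctrlH Y 2 (l1 t, l2 t, l3 t) p (\<lambda>i. u i t)) has_derivative (\<lambda>h. inner g h)) (at (x t, y t, z t))"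
      and "(lam has_vector_derivative - g) (at t)"
      unfolding \<gamma> lam by blast
    then have costate: "((\<lambda>t. (l1 t, l2 t, l3 t)) has_vector_derivative (0, - (2 * (u 0 t + u 1 t) * l3 t * y t), 0)) (at t)"
      using ctrlH_Y_gradient unfolding lam by fastforce
    have state: "((\<lambda>t. (x t, y t, z t)) has_vector_derivative
        (u 0 t + u 1 t, u 0 t - u 1 t, (u 0 t + u 1 t) * (y t)^2)) (at t)"
      using elim(1) unfolding \<gamma> by (simp add: sum_Y)
    show ?case
      using has_vector_derivative_triple_components[OF state]
        has_vector_derivative_triple_components[OF costate] by blast
  qed
qed

lemma Y_abnormal_arc_constraints:
  assumes abn: "abnormal_arc Y 2 T lam \<gamma> u a b"
    and \<gamma>: "\<gamma> = (\<lambda>t. (x t, y t, z t))" and lam: "lam = (\<lambda>t. (l1 t, l2 t, l3 t))"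
  shows "\<forall>s\<in>{a<..<b}. \<forall>t\<in>{a<..<b}. (y s)^2 = (y t)^2"
    and "AE t in lebesgue_on {a<..<b}. (u 0 t + u 1 t) * y t = 0 \<and> (u 0 t - u 1 t) * y t = 0"
proof -
  let ?I = "{a<..<b}"
  have ep: "extremal_pair Y 2 T lam \<gamma> u" and I: "?I \<subseteq> {0..T}"
    and sw: "\<forall>t\<in>?I. \<forall>j<2. switching Y lam \<gamma> j t = 0"
    using abn unfolding abnormal_arc_def by auto
  have costate: "l2 t = 0 \<and> l1 t = - (l3 t * (y t)^2) \<and> l3 t \<noteq> 0" if "t \<in> ?I" for t
  proof -
    have "l1 t + l2 t + l3 t * (y t)^2 = 0" "l1 t - l2 t + l3 t * (y t)^2 = 0"
      using sw that switching_Y[of lam t "l1 t" "l2 t" "l3 t" \<gamma> "x t" "y t" "z t"] \<gamma> lam by auto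
    moreover have "lam t \<noteq> 0" using ep that I unfolding extremal_pair_def by auto
    ultimately show ?thesis using lam by (auto simp: zero_prod_def)
  qed
  have ode: "AE t in lebesgue_on ?I. (l1 has_real_derivative 0) (at t) \<and> (l3 has_real_derivative 0) (at t) \<and>
      (l2 has_real_derivative - (2 * (u 0 t + u 1 t) * l3 t * y t)) (at t) \<and>
      (y has_real_derivative u 0 t - u 1 t) (at t)"
    using AE_lebesgue_on_subset[OF Y_extremal_pair_ODE[OF ep \<gamma> lam] I] by (auto elim: AE_mp)
  have "abs_cont_on {0..T} lam" using ep unfolding extremal_pair_def by blast
  note ac = abs_cont_on_triple_components(1,3)[OF this lam]
  have "l1 s = l1 t" "l3 s = l3 t" if "s \<in> ?I" "t \<in> ?I" for s t
    using ode that by (auto intro!: abs_cont_on_AE_deriv_0_const[OF ac(1) I] abs_cont_on_AE_deriv_0_const[OF ac(2) I]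
        elim: AE_mp)
  then show y_sq: "\<forall>s\<in>?I. \<forall>t\<in>?I. (y s)^2 = (y t)^2"
    using costate by (metis minus_equation_iff mult_cancel_left)
  have "AE t in lebesgue_on ?I. t \<in> ?I" using AE_space[of "lebesgue_on ?I"] by simp
  with ode show "AE t in lebesgue_on ?I. (u 0 t + u 1 t) * y t = 0 \<and> (u 0 t - u 1 t) * y t = 0"
  proof eventually_elim
    case (elim t)
    have dl2: "(l2 has_real_derivative - (2 * (u 0 t + u 1 t) * l3 t * y t)) (at t)"
      using elim(1) by blast
    have "- (2 * (u 0 t + u 1 t) * l3 t * y t) = 0"
    proof (rule has_real_derivative_const_on_interval[OF dl2 elim(2)])
      show "l2 s = l2 t" if "s \<in> ?I" for s using costate[OF that] costate[OF elim(2)] by simp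
    qed
    moreover have "2 * (y t * (u 0 t - u 1 t)) = 0"
    proof (rule has_real_derivative_const_on_interval[of "\<lambda>s. (y s)^2"])
      show "((\<lambda>s. (y s)^2) has_real_derivative 2 * (y t * (u 0 t - u 1 t))) (at t)"
        using elim by (auto intro!: derivative_eq_intros)
    qed (use elim(2) y_sq in blast)+
    ultimately show ?case using costate[OF elim(2)] by auto
  qed
qed

lemma Y_abnormal_arc_on_line:
  assumes abn: "abnormal_arc Y 2 T lam \<gamma> u a b" and nonconst: "\<not> (\<exists>c. \<forall>t\<in>{a<..<b}. \<gamma> t = c)"
  shows "(AE t in lebesgue_on {a<..<b}. u 0 t = u 1 t) \<and>
    (\<exists>z0. \<forall>t\<in>{a<..<b}. fst (snd (\<gamma> t)) = 0 \<and> snd (snd (\<gamma> t)) = z0)"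
proof -
  let ?I = "{a<..<b}"
  define x y z where "x = (\<lambda>t. fst (\<gamma> t))" "y = (\<lambda>t. fst (snd (\<gamma> t)))" "z = (\<lambda>t. snd (snd (\<gamma> t)))"
  define l1 l2 l3 where "l1 = (\<lambda>t. fst (lam t))" "l2 = (\<lambda>t. fst (snd (lam t)))" "l3 = (\<lambda>t. snd (snd (lam t)))"
  have \<gamma>: "\<gamma> = (\<lambda>t. (x t, y t, z t))" and lam: "lam = (\<lambda>t. (l1 t, l2 t, l3 t))"
    by (simp_all add: x_y_z_def l1_l2_l3_def)
  have ep: "extremal_pair Y 2 T lam \<gamma> u" and I: "?I \<subseteq> {0..T}" and "a < b"
    using abn unfolding abnormal_arc_def by auto
  note y_sq = Y_abnormal_arc_constraints(1)[OF abn \<gamma> lam]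
  note controls = Y_abnormal_arc_constraints(2)[OF abn \<gamma> lam]
  have ode: "AE t in lebesgue_on ?I. (x has_real_derivative u 0 t + u 1 t) (at t) \<and>
      (y has_real_derivative u 0 t - u 1 t) (at t) \<and> (z has_real_derivative (u 0 t + u 1 t) * (y t)^2) (at t)"
    using AE_lebesgue_on_subset[OF Y_extremal_pair_ODE[OF ep \<gamma> lam] I] by (auto elim: AE_mp)
  have in_I: "AE t in lebesgue_on ?I. t \<in> ?I" using AE_space[of "lebesgue_on ?I"] by simp
  have "abs_cont_on {0..T} \<gamma>" using ep unfolding extremal_pair_def admissible_def by blast
  note ac = abs_cont_on_triple_components[OF this \<gamma>]
  define m where "m = (a + b) / 2"
  have m: "m \<in> ?I" using \<open>a < b\<close> by (simp add: m_def)
  have const_on_I: "\<forall>t\<in>?I. f t = f m"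
    if "abs_cont_on {0..T} f" "AE t in lebesgue_on ?I. (f has_real_derivative 0) (at t)" for f
    using abs_cont_on_AE_deriv_0_const[OF that(1) I that(2) _ m] by blast
  have "AE t in lebesgue_on ?I. (z has_real_derivative 0) (at t)"
    using ode controls by eventually_elim (auto simp: power2_eq_square)
  then have z_const: "\<forall>t\<in>?I. z t = z m" by (rule const_on_I[OF ac(3)])
  show ?thesis
  proof (cases "y m = 0")
    case True
    then have y0: "\<forall>t\<in>?I. y t = 0" using y_sq m by (metis power_zero_numeral zero_eq_power2)
    from ode in_I have "AE t in lebesgue_on ?I. u 0 t = u 1 t"
    proof eventually_elim
      case (elim t)
      have "u 0 t - u 1 t = 0"
        using elim y0 by (intro has_real_derivative_const_on_interval[of y _ t a b]) auto
      then show ?case by simp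
    qed
    then show ?thesis using y0 z_const unfolding x_y_z_def by auto
  next
    case False
    have y_nonzero: "y t \<noteq> 0" if "t \<in> ?I" for t
    proof
      assume "y t = 0"
      moreover have "(y m)^2 = (y t)^2" using y_sq m that by blast
      ultimately show False using False by simp
    qed
    from controls in_I have "AE t in lebesgue_on ?I. u 0 t + u 1 t = 0 \<and> u 0 t - u 1 t = 0"
      by eventually_elim (use y_nonzero in auto)
    with ode have "AE t in lebesgue_on ?I. (x has_real_derivative 0) (at t)"
      "AE t in lebesgue_on ?I. (y has_real_derivative 0) (at t)"
      by (eventually_elim, auto)+
    then have "\<forall>t\<in>?I. x t = x m" "\<forall>t\<in>?I. y t = y m"
      using const_on_I ac by blast+
    then have "\<forall>t\<in>?I. \<gamma> t = \<gamma> m" using z_const \<gamma> by simp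
    then show ?thesis using nonconst by blast
  qed
qed

lemma Y_line_abnormal_lift:
  assumes adm: "admissible Y 2 T \<gamma> u" and "0 < T"
    and line: "\<forall>t\<in>{0..T}. fst (snd (\<gamma> t)) = 0 \<and> snd (snd (\<gamma> t)) = z0"
  shows "abnormal_arc Y 2 T (\<lambda>t. (0, 0, 1)) \<gamma> u 0 T"
proof -
  let ?lam = "\<lambda>t::real. (0::real, 0::real, 1::real)"
  have \<gamma>: "\<gamma> t = (fst (\<gamma> t), 0, z0)" if "t \<in> {0..T}" for t
    using line that by (metis prod.collapse)
  have switching_0: "switching Y ?lam \<gamma> j t = 0" if "t \<in> {0..T}" "j < 2" for j t
    using switching_Y[of ?lam t 0 0 1 \<gamma> "fst (\<gamma> t)" 0 z0] \<gamma>[OF that(1)] that(2)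
    by (auto simp: less_2_cases_iff)
  have "AE t in lebesgue_on {0..T}. \<exists>g.
      ((\<lambda>p. ctrlH Y 2 (?lam t) p (\<lambda>i. u i t)) has_derivative (\<lambda>h. inner g h)) (at (\<gamma> t)) \<and>
      (?lam has_vector_derivative - g) (at t)"
  proof (rule AE_I2, intro exI[of _ "(0, 0, 0)"] conjI)
    fix t assume "t \<in> space (lebesgue_on {0..T})"
    then show "((\<lambda>p. ctrlH Y 2 (?lam t) p (\<lambda>i. u i t)) has_derivative (\<lambda>h. inner (0, 0, 0) h)) (at (\<gamma> t))"
      using ctrlH_Y_has_derivative[of 0 0 1 "\<lambda>i. u i t" 0 "fst (\<gamma> t)" z0] \<gamma>[of t] by simp
    show "(?lam has_vector_derivative - (0, 0, 0)) (at t)"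
      by (simp add: has_vector_derivative_const zero_prod_def[symmetric])
  qed
  moreover have "AE t in lebesgue_on {0..T}.
      (\<Sum>i<2. u i t * inner (?lam t) (Y i (\<gamma> t))) = (\<Sum>i<2. \<bar>inner (?lam t) (Y i (\<gamma> t))\<bar>) \<and>
      (\<Sum>i<2. \<bar>inner (?lam t) (Y i (\<gamma> t))\<bar>) = 0"
    using switching_0 by (intro AE_I2) (simp add: switching_def)
  ultimately have "extremal_pair Y 2 T ?lam \<gamma> u"
    unfolding extremal_pair_def using adm abs_cont_on_const by (auto simp: zero_prod_def)
  then show ?thesis unfolding abnormal_arc_def using \<open>0 < T\<close> switching_0 by auto
qed

theorem mainTheorem12:
  shows "(\<forall>T lam \<gamma> u a b.
            abnormal_arc Y 2 T lam \<gamma> u a b \<and> \<not> (\<exists>c. \<forall>t\<in>{a<..<b}. \<gamma> t = c) \<longrightarrow>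
              (AE t in lebesgue_on {a<..<b}. u 0 t = u 1 t) \<and>
              (\<exists>z0::real. \<forall>t\<in>{a<..<b}. fst (snd (\<gamma> t)) = 0 \<and> snd (snd (\<gamma> t)) = z0))
       \<and>
         (\<forall>T \<gamma> u (z0::real).
            admissible Y 2 T \<gamma> u \<and> 0 < T \<and>
            (\<forall>t\<in>{0..T}. fst (snd (\<gamma> t)) = 0 \<and> snd (snd (\<gamma> t)) = z0) \<longrightarrow>
              (\<exists>lam. abnormal_arc Y 2 T lam \<gamma> u 0 T))"
  using Y_abnormal_arc_on_line Y_line_abnormal_lift by blast

end
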